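(* Let $\mathcal{STAB}$ be the set of channels $\rho\mapsto U\rho U^\dagger$ with $U$ an element of the $n$-qubit Clifford group. Then there is a function $\eta(n)\to0$ as $n\to\infty$ such that for every $m$ and every sample $S=(z_1,\ldots,z_m)$ with $z_i\in\mathbb{F}_2^n\times\mathbb{F}_2^n$, \[ \hat{R}_S(\mathcal{F}(\mathcal{STAB}))\le 4\,\frac{(1+\eta(n))\,n}{\sqrt m}\,\max_{\Phi\in\mathcal{STAB}}\|\vec f_\Phi\|_\infty, \] where $\vec f_\Phi=(f_\Phi(z_1),\ldots,f_\Phi(z_m))$.
   Context: For a channel $\Phi$ on $n$ qubits, $f_\Phi(x,y)=\mathrm{Tr}[\Phi(|x\rangle\langle x|)\,|y\rangle\langle y|]$ for $x,y\in\mathbb{F}_2^n$; $\mathcal{F}(\Omega)=\{f_\Phi:\Phi\in\Omega\}$. Empirical Rademacher complexity: $\hat{R}_S(\mathcal{G})=\mathbb{E}_{\epsilon}[\sup_{g\in\mathcal{G}}\frac1m\sum_i\epsilon_i g(z_i)]$, $\epsilon_i$ i.i.d. uniform on $\{\pm1\}$. *)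

theory Defs
  imports Complex_Main "HOL-Library.FuncSet" "Jordan_Normal_Form.Matrix"
begin

(* Computational basis of n qubits: x \<in> F_2^n encoded as the natural number x < 2^n
   (bit i of x = i-th coordinate). Operators are 2^n x 2^n complex matrices. *)

definition dag :: "complex mat \<Rightarrow> complex mat" where
  "dag U = mat (dim_col U) (dim_row U) (\<lambda>(i,j). cnj (U $$ (j,i)))"

definition bdot :: "nat \<Rightarrow> nat \<Rightarrow> nat \<Rightarrow> nat" where
  "bdot n b x = card {i. i < n \<and> bit (and b x) i}"

(* Pauli operator X^a Z^b :  |x> \<mapsto> (-1)^(b.x) |x xor a> *)
definition pauli :: "nat \<Rightarrow> nat \<Rightarrow> nat \<Rightarrow> complex mat" where
  "pauli n a b = mat (2^n) (2^n)
     (\<lambda>(y,x). if y = xor x a then (-1) ^ bdot n b x else 0)"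

definition pauli_group :: "nat \<Rightarrow> complex mat set" where
  "pauli_group n = {(\<i> ^ k) \<cdot>\<^sub>m pauli n a b | k a b. k < 4 \<and> a < 2^n \<and> b < 2^n}"

definition unitary :: "nat \<Rightarrow> complex mat \<Rightarrow> bool" where
  "unitary N U \<longleftrightarrow> U \<in> carrier_mat N N \<and> U * dag U = 1\<^sub>m N \<and> dag U * U = 1\<^sub>m N"

definition clifford :: "nat \<Rightarrow> complex mat set" where
  "clifford n = {U. unitary (2^n) U \<and> (\<forall>P \<in> pauli_group n. U * P * dag U \<in> pauli_group n)}"

definition mtrace :: "complex mat \<Rightarrow> complex" where
  "mtrace A = (\<Sum>i<dim_row A. A $$ (i,i))"

definition proj :: "nat \<Rightarrow> nat \<Rightarrow> complex mat" where
  "proj n x = mat (2^n) (2^n) (\<lambda>(i,j). if i = x \<and> j = x then 1 else 0)"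

(* f_Phi(x,y) = Tr[Phi(|x><x|) |y><y|] for the channel Phi(rho) = U rho U^dagger *)
definition fch :: "nat \<Rightarrow> complex mat \<Rightarrow> nat \<times> nat \<Rightarrow> real" where
  "fch n U z = Re (mtrace (U * proj n (fst z) * dag U * proj n (snd z)))"

definition F_stab :: "nat \<Rightarrow> (nat \<times> nat \<Rightarrow> real) set" where
  "F_stab n = fch n ` clifford n"

definition emp_rademacher :: "(nat \<times> nat) list \<Rightarrow> (nat \<times> nat \<Rightarrow> real) set \<Rightarrow> real" where
  "emp_rademacher zs G =
     (\<Sum>\<epsilon> \<in> {..<length zs} \<rightarrow>\<^sub>E {-1, 1::real}.
        (SUP g\<in>G. (1 / real (length zs)) * (\<Sum>i<length zs. \<epsilon> i * g (zs ! i))))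
     / 2 ^ length zs"

definition sup_norm_on :: "(nat \<times> nat) list \<Rightarrow> (nat \<times> nat \<Rightarrow> real) \<Rightarrow> real" where
  "sup_norm_on zs g = Max ((\<lambda>i. \<bar>g (zs ! i)\<bar>) ` {..<length zs})"

end

theory Submission
  imports Defs "HOL-Probability.Hoeffding"
begin

text \<open>
  A Clifford unitary is determined up to a global phase by how it conjugates the
  \<open>2n\<close> generators \<open>X\<^sub>i, Z\<^sub>i\<close> of the Pauli group (whatever commutes with all of them is
  scalar), and the function \<open>f\<^sub>U(x,y) = |U\<^sub>y\<^sub>x|\<^sup>2\<close> does not see that phase. Hence
  \<open>|\<F>(STAB)| \<le> |Pauli group| ^ (2n) \<le> 2 ^ (4n(n+1))\<close>, and Massart's finite class lemma
  gives \<open>R\<^sub>S \<le> B \<surd>(2 ln |\<F>(STAB)|) / \<surd>m \<le> 4 n B / \<surd>m\<close>, so \<open>\<eta> = 0\<close> works.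
\<close>

lemma index_mult_square:
  fixes A B :: "'a :: semiring_0 mat"
  assumes "A \<in> carrier_mat N N" "B \<in> carrier_mat N N" "i < N" "j < N"
  shows "(A * B) $$ (i,j) = (\<Sum>k<N. A $$ (i,k) * B $$ (k,j))"
  using assms by (simp add: scalar_prod_def atLeast0LessThan)

lemma dag_carrier: "U \<in> carrier_mat N N \<Longrightarrow> dag U \<in> carrier_mat N N"
  by (simp add: dag_def)

lemma index_dag: "U \<in> carrier_mat N N \<Longrightarrow> i < N \<Longrightarrow> j < N \<Longrightarrow> dag U $$ (i,j) = cnj (U $$ (j,i))"
  by (simp add: dag_def)

lemma dag_one: "dag (1\<^sub>m N) = 1\<^sub>m N"
  by (rule eq_matI) (auto simp: dag_def)

lemma proj_carrier: "proj n x \<in> carrier_mat (2^n) (2^n)"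
  by (simp add: proj_def)

lemma index_proj: "i < 2^n \<Longrightarrow> j < 2^n \<Longrightarrow> proj n x $$ (i,j) = (if i = x \<and> j = x then 1 else 0)"
  by (simp add: proj_def)

lemma pauli_carrier: "pauli n a b \<in> carrier_mat (2^n) (2^n)"
  by (simp add: pauli_def)

lemma index_pauli:
  "y < 2^n \<Longrightarrow> x < 2^n \<Longrightarrow> pauli n a b $$ (y,x) = (if y = xor x a then (-1) ^ bdot n b x else 0)"
  by (simp add: pauli_def)

lemma pauli_group_carrier: "P \<in> pauli_group n \<Longrightarrow> P \<in> carrier_mat (2^n) (2^n)"
  unfolding pauli_group_def by (auto simp: pauli_def)

subsection \<open>The functions \<open>f\<^sub>U\<close>\<close>

lemma index_mult_proj:
  assumes "A \<in> carrier_mat (2^n) (2^n)" "i < 2^n" "j < 2^n"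
  shows "(A * proj n x) $$ (i,j) = (if j = x then A $$ (i,x) else 0)"
proof -
  have "(A * proj n x) $$ (i,j) = (\<Sum>k<2^n. A $$ (i,k) * proj n x $$ (k,j))"
    by (rule index_mult_square[OF assms(1) proj_carrier assms(2,3)])
  also have "\<dots> = (\<Sum>k<2^n. if k = x \<and> j = x then A $$ (i,x) else 0)"
    using assms(3) by (intro sum.cong) (auto simp: index_proj)
  finally show ?thesis using assms(3) by auto
qed

lemma mtrace_mult_proj:
  assumes "A \<in> carrier_mat (2^n) (2^n)"
  shows "mtrace (A * proj n y) = (if y < 2^n then A $$ (y,y) else 0)"
proof -
  have "mtrace (A * proj n y) = (\<Sum>i<2^n. if i = y then A $$ (i,y) else 0)"
    unfolding mtrace_def using assms by (intro sum.cong) (auto simp: index_mult_proj)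
  then show ?thesis by simp
qed

lemma fch_eq_cmod_square:
  assumes U: "U \<in> carrier_mat (2^n) (2^n)"
  shows "fch n U (x,y) = (if x < 2^n \<and> y < 2^n then (cmod (U $$ (y,x)))^2 else 0)"
proof -
  let ?N = "(2::nat)^n"
  have UP: "U * proj n x \<in> carrier_mat ?N ?N" using U proj_carrier by auto
  have "(U * proj n x * dag U) $$ (y,y) = (\<Sum>k<?N. (U * proj n x) $$ (y,k) * dag U $$ (k,y))"
    if "y < ?N" for y
    by (rule index_mult_square[OF UP dag_carrier[OF U] that that])
  also have "\<dots> y = (\<Sum>k<?N. if k = x then U $$ (y,x) * cnj (U $$ (y,x)) else 0)" if "y < ?N" for y
    using that U by (intro sum.cong) (auto simp: index_mult_proj index_dag)
  finally have diag: "(U * proj n x * dag U) $$ (y,y) = (if x < ?N then U $$ (y,x) * cnj (U $$ (y,x)) else 0)"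
    if "y < ?N" for y
    using that by simp
  have "mtrace (U * proj n x * dag U * proj n y) = (if y < ?N then (U * proj n x * dag U) $$ (y,y) else 0)"
    using mult_carrier_mat[OF UP dag_carrier[OF U]] by (rule mtrace_mult_proj)
  then show ?thesis
    unfolding fch_def using diag by (auto simp: complex_norm_square[symmetric])
qed

lemma unitary_column_norm_sum:
  assumes "unitary N U" "x < N"
  shows "(\<Sum>k<N. (cmod (U $$ (k,x)))^2) = 1"
proof -
  have U: "U \<in> carrier_mat N N" using assms unfolding unitary_def by auto
  have "(1::complex) = (dag U * U) $$ (x,x)" using assms unfolding unitary_def by auto
  also have "\<dots> = (\<Sum>k<N. dag U $$ (x,k) * U $$ (k,x))"
    by (rule index_mult_square[OF dag_carrier[OF U] U assms(2) assms(2)])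
  also have "\<dots> = (\<Sum>k<N. complex_of_real ((cmod (U $$ (k,x)))^2))"
    using U assms(2) by (intro sum.cong) (auto simp: index_dag complex_norm_square[symmetric] mult.commute)
  finally have "complex_of_real (\<Sum>k<N. (cmod (U $$ (k,x)))^2) = 1"
    unfolding of_real_sum by (rule sym)
  then show ?thesis by (simp only: of_real_eq_1_iff)
qed

lemma fch_nonneg: "U \<in> carrier_mat (2^n) (2^n) \<Longrightarrow> 0 \<le> fch n U z"
  by (cases z) (simp add: fch_eq_cmod_square)

lemma fch_le_one:
  assumes "unitary (2^n) U"
  shows "fch n U z \<le> 1"
proof (cases z)
  case (Pair x y)
  have U: "U \<in> carrier_mat (2^n) (2^n)" using assms unfolding unitary_def by auto
  have "(cmod (U $$ (y,x)))^2 \<le> (\<Sum>k<2^n. (cmod (U $$ (k,x)))^2)" if "y < 2^n"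
    using that by (intro member_le_sum) auto
  then show ?thesis
    using unitary_column_norm_sum[OF assms] by (auto simp: Pair fch_eq_cmod_square[OF U])
qed

lemma abs_le_sup_norm_on: "i < length zs \<Longrightarrow> \<bar>g (zs ! i)\<bar> \<le> sup_norm_on zs g"
  unfolding sup_norm_on_def by (intro Max_ge) auto

lemma sup_norm_on_fch_le_one:
  assumes "unitary (2^n) U" "zs \<noteq> []"
  shows "sup_norm_on zs (fch n U) \<le> 1"
proof -
  have "\<bar>fch n U z\<bar> \<le> 1" for z :: "nat \<times> nat"
    using assms fch_le_one[OF assms(1)] fch_nonneg[of U n] unfolding unitary_def by (simp add: abs_le_iff)
  then show ?thesis using assms(2) unfolding sup_norm_on_def by (intro Max.boundedI) blast+
qed

subsection \<open>Matrices commuting with all \<open>X\<^sub>i\<close> and \<open>Z\<^sub>i\<close> are scalar\<close>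

definition pauli_X :: "nat \<Rightarrow> nat \<Rightarrow> complex mat" where
  "pauli_X n i = pauli n (2^i) 0"

definition pauli_Z :: "nat \<Rightarrow> nat \<Rightarrow> complex mat" where
  "pauli_Z n i = pauli n 0 (2^i)"

lemma bdot_exp: "i < n \<Longrightarrow> bdot n (2^i) x = (if bit x i then 1 else 0)"
proof -
  assume "i < n"
  then have "{j. j < n \<and> bit (and (2^i) x) j} = (if bit x i then {i} else {})"
    by (auto simp: bit_and_iff bit_exp_iff)
  then show ?thesis unfolding bdot_def by simp
qed

lemma bdot_0_left: "bdot n 0 x = 0"
  unfolding bdot_def by simp

lemma xor_exp_less:
  assumes "x < 2^n" "i < n"
  shows "xor x (2^i) < (2::nat)^n"
proof -
  have "take_bit n (xor x (2^i)) = xor x (2^i)"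
    using assms by (simp add: take_bit_xor take_bit_nat_eq_self)
  then show ?thesis by (metis take_bit_nat_eq_self_iff)
qed

lemma xor_eq_swap: "y = xor k (a::nat) \<longleftrightarrow> k = xor y a"
  by (metis xor.assoc xor_self_eq xor.right_neutral)

lemma not_bit_ge: "x < 2^n \<Longrightarrow> n \<le> i \<Longrightarrow> \<not> bit (x::nat) i"
  by (metis bit_take_bit_iff not_less take_bit_nat_eq_self_iff)

lemma take_bit_Suc_eq_xor:
  "take_bit (Suc j) (x::nat) = (if bit x j then xor (take_bit j x) (2^j) else take_bit j x)"
  by (rule bit_eqI) (auto simp: bit_take_bit_iff bit_xor_iff bit_exp_iff less_Suc_eq)

lemma pauli_X_carrier: "pauli_X n i \<in> carrier_mat (2^n) (2^n)"
  by (simp add: pauli_X_def pauli_carrier)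

lemma pauli_Z_carrier: "pauli_Z n i \<in> carrier_mat (2^n) (2^n)"
  by (simp add: pauli_Z_def pauli_carrier)

lemma index_pauli_X:
  "y < 2^n \<Longrightarrow> x < 2^n \<Longrightarrow> pauli_X n i $$ (y,x) = (if y = xor x (2^i) then 1 else 0)"
  by (simp add: pauli_X_def index_pauli bdot_0_left)

lemma index_pauli_Z: "y < 2^n \<Longrightarrow> x < 2^n \<Longrightarrow> i < n \<Longrightarrow>
  pauli_Z n i $$ (y,x) = (if y = x then (if bit x i then -1 else 1) else 0)"
  by (simp add: pauli_Z_def index_pauli bdot_exp)

lemma index_mult_pauli_Z:
  assumes "W \<in> carrier_mat (2^n) (2^n)" "y < 2^n" "x < 2^n" "i < n"
  shows "(W * pauli_Z n i) $$ (y,x) = W $$ (y,x) * (if bit x i then -1 else 1)"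
proof -
  have "(W * pauli_Z n i) $$ (y,x) = (\<Sum>k<2^n. W $$ (y,k) * pauli_Z n i $$ (k,x))"
    by (rule index_mult_square[OF assms(1) pauli_Z_carrier assms(2,3)])
  also have "\<dots> = (\<Sum>k<2^n. if k = x then W $$ (y,x) * (if bit x i then -1 else 1) else 0)"
    using assms by (intro sum.cong refl) (simp add: index_pauli_Z)
  finally show ?thesis using assms(3) by simp
qed

lemma index_pauli_Z_mult:
  assumes "W \<in> carrier_mat (2^n) (2^n)" "y < 2^n" "x < 2^n" "i < n"
  shows "(pauli_Z n i * W) $$ (y,x) = (if bit y i then -1 else 1) * W $$ (y,x)"
proof -
  have "(pauli_Z n i * W) $$ (y,x) = (\<Sum>k<2^n. pauli_Z n i $$ (y,k) * W $$ (k,x))"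
    by (rule index_mult_square[OF pauli_Z_carrier assms(1) assms(2,3)])
  also have "\<dots> = (\<Sum>k<2^n. if k = y then (if bit y i then -1 else 1) * W $$ (y,x) else 0)"
    using assms by (intro sum.cong refl) (auto simp: index_pauli_Z)
  finally show ?thesis using assms(2) by simp
qed

lemma index_mult_pauli_X:
  assumes "W \<in> carrier_mat (2^n) (2^n)" "y < 2^n" "x < 2^n" "i < n"
  shows "(W * pauli_X n i) $$ (y,x) = W $$ (y, xor x (2^i))"
proof -
  have "(W * pauli_X n i) $$ (y,x) = (\<Sum>k<2^n. W $$ (y,k) * pauli_X n i $$ (k,x))"
    by (rule index_mult_square[OF assms(1) pauli_X_carrier assms(2,3)])
  also have "\<dots> = (\<Sum>k<2^n. if k = xor x (2^i) then W $$ (y, xor x (2^i)) else 0)"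
    using assms by (intro sum.cong refl) (auto simp: index_pauli_X)
  finally show ?thesis using xor_exp_less[OF assms(3,4)] by simp
qed

lemma index_pauli_X_mult:
  assumes "W \<in> carrier_mat (2^n) (2^n)" "y < 2^n" "x < 2^n" "i < n"
  shows "(pauli_X n i * W) $$ (y,x) = W $$ (xor y (2^i), x)"
proof -
  have "(pauli_X n i * W) $$ (y,x) = (\<Sum>k<2^n. pauli_X n i $$ (y,k) * W $$ (k,x))"
    by (rule index_mult_square[OF pauli_X_carrier assms(1) assms(2,3)])
  also have "\<dots> = (\<Sum>k<2^n. if k = xor y (2^i) then W $$ (xor y (2^i), x) else 0)"
    using assms by (intro sum.cong refl) (auto simp: index_pauli_X xor_eq_swap)
  finally show ?thesis using xor_exp_less[OF assms(2,4)] by simp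
qed

lemma commute_pauli_Z_imp_off_diagonal_zero:
  assumes W: "W \<in> carrier_mat (2^n) (2^n)"
    and commute: "\<And>i. i < n \<Longrightarrow> W * pauli_Z n i = pauli_Z n i * W"
    and yx: "y < 2^n" "x < 2^n" "y \<noteq> x"
  shows "W $$ (y,x) = 0"
proof -
  obtain i where i: "bit x i \<noteq> bit y i" using yx(3) bit_eq_iff by metis
  then have "i < n" using not_bit_ge yx by (metis not_less)
  then have "W $$ (y,x) * (if bit x i then -1 else 1) = (if bit y i then -1 else 1) * W $$ (y,x)"
    using index_mult_pauli_Z[OF W yx(1,2)] index_pauli_Z_mult[OF W yx(1,2)] commute by metis
  then show ?thesis using i by (cases "bit x i") auto
qed

lemma commute_pauli_X_imp_diagonal_const:
  assumes W: "W \<in> carrier_mat (2^n) (2^n)"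
    and commute: "\<And>i. i < n \<Longrightarrow> W * pauli_X n i = pauli_X n i * W"
    and x: "x < 2^n"
  shows "W $$ (x,x) = W $$ (0,0)"
proof -
  have flip: "W $$ (xor y (2^i), xor y (2^i)) = W $$ (y,y)" if "y < 2^n" "i < n" for y i
    using index_mult_pauli_X[OF W xor_exp_less[OF that] that] commute[OF that(2)]
      index_pauli_X_mult[OF W xor_exp_less[OF that] that]
    by (simp add: xor.assoc)
  have "W $$ (take_bit j x, take_bit j x) = W $$ (0,0)" for j
  proof (induction j)
    case (Suc j)
    have "take_bit j x < 2^n" using x by (meson le_less_trans take_bit_nat_less_eq_self)
    moreover have "bit x j \<Longrightarrow> j < n" using not_bit_ge x by (metis not_less)
    ultimately show ?case using Suc flip by (simp add: take_bit_Suc_eq_xor)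
  qed simp
  from this[of n] show ?thesis using x by (simp add: take_bit_nat_eq_self)
qed

lemma commute_paulis_imp_scalar:
  assumes "W \<in> carrier_mat (2^n) (2^n)"
    and "\<And>i. i < n \<Longrightarrow> W * pauli_X n i = pauli_X n i * W"
    and "\<And>i. i < n \<Longrightarrow> W * pauli_Z n i = pauli_Z n i * W"
    and "x < 2^n" "y < 2^n"
  shows "W $$ (y,x) = (if y = x then W $$ (0,0) else 0)"
  using commute_pauli_Z_imp_off_diagonal_zero[OF assms(1,3,5,4)]
    commute_pauli_X_imp_diagonal_const[OF assms(1,2,4)] by auto

subsection \<open>Finiteness of \<open>\<F>(STAB)\<close>\<close>

lemma commute_if_conj_eq:
  fixes U V P :: "complex mat"
  assumes U: "U \<in> carrier_mat N N" and V: "V \<in> carrier_mat N N" and P: "P \<in> carrier_mat N N"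
    and uU: "dag U * U = 1\<^sub>m N" and vV: "dag V * V = 1\<^sub>m N"
    and conj: "U * P * dag U = V * P * dag V"
  shows "dag V * U * P = P * (dag V * U)"
proof -
  note carriers = U V P dag_carrier[OF U] dag_carrier[OF V]
  have assoc: "A * B * C = A * (B * C)"
    if "A \<in> carrier_mat N N" "B \<in> carrier_mat N N" "C \<in> carrier_mat N N" for A B C :: "complex mat"
    using that by (rule assoc_mult_mat)
  have "U * P = U * P * (dag U * U)" using U P by (simp add: uU)
  also have "\<dots> = (U * P * dag U) * U" using carriers by (simp add: assoc)
  also have "\<dots> = V * P * dag V * U" by (simp add: conj)
  finally have UP: "U * P = V * P * dag V * U" .
  have "dag V * U * P = dag V * (V * P * dag V * U)" using carriers by (simp add: assoc UP)
  also have "\<dots> = (dag V * V) * P * (dag V * U)" using carriers by (simp add: assoc)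
  finally show ?thesis using P by (simp add: vV)
qed

definition pauli_gen :: "nat \<Rightarrow> nat \<Rightarrow> complex mat" where
  "pauli_gen n i = (if i < n then pauli_X n i else pauli_Z n (i - n))"

definition conj_action :: "nat \<Rightarrow> complex mat \<Rightarrow> nat \<Rightarrow> complex mat" where
  "conj_action n U = (\<lambda>i\<in>{..<2*n}. U * pauli_gen n i * dag U)"

lemma conj_action_eq_imp_phase:
  assumes u: "unitary (2^n) U" and v: "unitary (2^n) V"
    and action: "conj_action n U = conj_action n V"
  obtains c where "cmod c = 1" "\<And>x y. x < 2^n \<Longrightarrow> y < 2^n \<Longrightarrow> U $$ (y,x) = V $$ (y,x) * c"
proof -
  let ?N = "(2::nat)^n"
  have U: "U \<in> carrier_mat ?N ?N" and V: "V \<in> carrier_mat ?N ?N"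
    and uU: "dag U * U = 1\<^sub>m ?N" and vV: "dag V * V = 1\<^sub>m ?N" and Vv: "V * dag V = 1\<^sub>m ?N"
    using u v unfolding unitary_def by auto
  define W where "W = dag V * U"
  have W: "W \<in> carrier_mat ?N ?N" unfolding W_def using U dag_carrier[OF V] by simp
  have conj: "U * pauli_gen n i * dag U = V * pauli_gen n i * dag V" if "i < 2*n" for i
    using fun_cong[OF action, of i] that unfolding conj_action_def by simp
  have X: "W * pauli_X n i = pauli_X n i * W" if "i < n" for i
    unfolding W_def using conj[of i] that
    by (intro commute_if_conj_eq[OF U V pauli_X_carrier uU vV]) (simp add: pauli_gen_def)
  have Z: "W * pauli_Z n i = pauli_Z n i * W" if "i < n" for i
    unfolding W_def using conj[of "n+i"] that
    by (intro commute_if_conj_eq[OF U V pauli_Z_carrier uU vV]) (simp add: pauli_gen_def)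
  define c where "c = W $$ (0,0)"
  have W_scalar: "W $$ (y,x) = (if y = x then c else 0)" if "x < ?N" "y < ?N" for x y
    unfolding c_def using commute_paulis_imp_scalar[OF W X Z that] .
  have "V * W = (V * dag V) * U" unfolding W_def using U V dag_carrier[OF V] by (simp add: assoc_mult_mat)
  then have VW: "V * W = U" using U by (simp add: Vv)
  have entries: "U $$ (y,x) = V $$ (y,x) * c" if "x < ?N" "y < ?N" for x y
  proof -
    have "U $$ (y,x) = (\<Sum>k<?N. V $$ (y,k) * W $$ (k,x))"
      using index_mult_square[OF V W that(2,1)] VW by simp
    also have "\<dots> = (\<Sum>k<?N. if k = x then V $$ (y,x) * c else 0)"
      using that by (intro sum.cong refl) (auto simp: W_scalar)
    finally show ?thesis using that by simp
  qed
  have "(1::real) = (\<Sum>k<?N. (cmod (U $$ (k,0)))^2)" using unitary_column_norm_sum[OF u] by simp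
  also have "\<dots> = (\<Sum>k<?N. (cmod (V $$ (k,0)))^2 * (cmod c)^2)"
    by (intro sum.cong refl) (simp add: entries norm_mult power_mult_distrib)
  also have "\<dots> = (\<Sum>k<?N. (cmod (V $$ (k,0)))^2) * (cmod c)^2"
    by (rule sum_distrib_right[symmetric])
  also have "\<dots> = (cmod c)^2" using unitary_column_norm_sum[OF v] by simp
  finally have "cmod c = 1"
    using norm_ge_zero[of c] by (simp add: power2_eq_1_iff)
  then show ?thesis by (rule that) (simp add: entries)
qed

lemma fch_eq_if_conj_action_eq:
  assumes u: "unitary (2^n) U" and v: "unitary (2^n) V"
    and "conj_action n U = conj_action n V"
  shows "fch n U = fch n V"
proof
  fix z :: "nat \<times> nat"
  obtain c where "cmod c = 1" "\<And>x y. x < 2^n \<Longrightarrow> y < 2^n \<Longrightarrow> U $$ (y,x) = V $$ (y,x) * c"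
    using conj_action_eq_imp_phase[OF assms] by blast
  moreover have "U \<in> carrier_mat (2^n) (2^n)" "V \<in> carrier_mat (2^n) (2^n)"
    using u v unfolding unitary_def by auto
  ultimately show "fch n U z = fch n V z"
    by (cases z) (simp add: fch_eq_cmod_square norm_mult)
qed

lemma pauli_group_eq_image:
  "pauli_group n = (\<lambda>(k,a,b). (\<i> ^ k) \<cdot>\<^sub>m pauli n a b) ` ({..<4} \<times> {..<2^n} \<times> {..<2^n})"
  unfolding pauli_group_def by force

lemma finite_pauli_group: "finite (pauli_group n)"
  unfolding pauli_group_eq_image by simp

lemma card_pauli_group_le: "card (pauli_group n) \<le> 2^(2*n+2)"
proof -
  have "card (pauli_group n) \<le> card ({..<4::nat} \<times> {..<(2::nat)^n} \<times> {..<(2::nat)^n})"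
    unfolding pauli_group_eq_image by (rule card_image_le) simp
  also have "\<dots> = 2^2 * (2^n * 2^n)" by (simp add: card_cartesian_product)
  also have "\<dots> = 2^(2*n+2)" by (simp only: mult_2 power_add) (simp add: mult_ac)
  finally show ?thesis .
qed

lemma pauli_gen_in_pauli_group:
  assumes "i < 2*n"
  shows "pauli_gen n i \<in> pauli_group n"
proof -
  have "pauli_gen n i = (\<i> ^ 0) \<cdot>\<^sub>m pauli n (if i < n then 2^i else 0) (if i < n then 0 else 2^(i-n))"
    by (rule eq_matI) (auto simp: pauli_gen_def pauli_X_def pauli_Z_def pauli_def)
  moreover have "(if i < n then 2^i else 0) < (2::nat)^n" "(if i < n then 0 else 2^(i-n)) < (2::nat)^n"
    using assms by auto
  ultimately show ?thesis
    unfolding pauli_group_def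
    by (intro CollectI exI[of _ 0] exI[of _ "if i < n then 2^i else 0"]
        exI[of _ "if i < n then 0 else 2^(i-n)"]) simp
qed

lemma conj_action_in_PiE: "U \<in> clifford n \<Longrightarrow> conj_action n U \<in> {..<2*n} \<rightarrow>\<^sub>E pauli_group n"
  unfolding conj_action_def clifford_def using pauli_gen_in_pauli_group by auto

lemma one_mat_in_clifford: "1\<^sub>m (2^n) \<in> clifford n"
proof -
  have "1\<^sub>m (2^n) * P * 1\<^sub>m (2^n) = P" if "P \<in> pauli_group n" for P
    using pauli_group_carrier[OF that] by simp
  then show ?thesis unfolding clifford_def unitary_def by (simp add: dag_one)
qed

lemma card_image_le_if_factors:
  assumes "finite (f ` A)" and "\<And>x y. x \<in> A \<Longrightarrow> y \<in> A \<Longrightarrow> f x = f y \<Longrightarrow> g x = g y"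
  shows "finite (g ` A)" "card (g ` A) \<le> card (f ` A)"
proof -
  define h where "h p = g (SOME x. x \<in> A \<and> f x = p)" for p
  have "h (f x) = g x" if "x \<in> A" for x
    unfolding h_def
  proof (rule someI2[of "\<lambda>y. y \<in> A \<and> f y = f x" x])
    show "x \<in> A \<and> f x = f x" using that by simp
    show "g y = g x" if "y \<in> A \<and> f y = f x" for y
      using assms(2)[of y x] that \<open>x \<in> A\<close> by simp
  qed
  then have "g ` A = h ` f ` A" by (simp add: image_image)
  then show "finite (g ` A)" "card (g ` A) \<le> card (f ` A)"
    using assms(1) by (simp_all add: card_image_le)
qed

lemma finite_card_F_stab: "finite (F_stab n)" "card (F_stab n) \<le> 2^(4*n*(n+1))"
proof -
  let ?P = "{..<2*n} \<rightarrow>\<^sub>E pauli_group n"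
  have sub: "conj_action n ` clifford n \<subseteq> ?P" using conj_action_in_PiE by auto
  have fin: "finite ?P" using finite_pauli_group by (intro finite_PiE) auto
  have factors: "fch n U = fch n V"
    if "U \<in> clifford n" "V \<in> clifford n" "conj_action n U = conj_action n V" for U V
    using that by (intro fch_eq_if_conj_action_eq) (auto simp: clifford_def)
  show "finite (F_stab n)"
    unfolding F_stab_def using finite_subset[OF sub fin] factors by (rule card_image_le_if_factors)
  have "card (F_stab n) \<le> card (conj_action n ` clifford n)"
    unfolding F_stab_def using finite_subset[OF sub fin] factors by (rule card_image_le_if_factors)
  also have "\<dots> \<le> card ?P" by (rule card_mono[OF fin sub])
  also have "\<dots> = card (pauli_group n) ^ (2*n)" by (simp add: card_PiE)
  also have "\<dots> \<le> (2^(2*n+2)) ^ (2*n)" by (rule power_mono[OF card_pauli_group_le]) simp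
  also have "\<dots> = 2^((2*n+2)*(2*n))" by (simp only: power_mult)
  also have "\<dots> = 2^(4*n*(n+1))" by (rule arg_cong[where f="\<lambda>k. (2::nat)^k"]) (simp add: algebra_simps)
  finally show "card (F_stab n) \<le> 2^(4*n*(n+1))" .
qed

lemma F_stab_nonempty: "F_stab n \<noteq> {}"
  using one_mat_in_clifford unfolding F_stab_def by auto

lemma sqrt_two_ln_card_F_stab_le: "sqrt (2 * ln (real (card (F_stab n)))) \<le> 4 * real n"
proof -
  have pos: "0 < real (card (F_stab n))"
    using finite_card_F_stab(1) F_stab_nonempty by (simp add: card_gt_0_iff)
  have "ln (real (card (F_stab n))) \<le> ln (real ((2::nat)^(4*n*(n+1))))"
    using pos finite_card_F_stab(2) by (subst ln_le_cancel_iff) auto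
  also have "\<dots> = real (4*n*(n+1)) * ln 2" by (simp add: ln_realpow)
  also have "\<dots> \<le> real (4*n*(n+1))" using ln_2_less_1 by (intro mult_left_le) auto
  also have "\<dots> \<le> 8 * real n ^ 2" by (cases n) (auto simp: power2_eq_square algebra_simps)
  finally have "2 * ln (real (card (F_stab n))) \<le> (4 * real n)^2" by (simp add: power2_eq_square)
  then have "sqrt (2 * ln (real (card (F_stab n)))) \<le> sqrt ((4 * real n)^2)"
    by (rule real_sqrt_le_mono)
  also have "sqrt ((4 * real n)^2) = 4 * real n" by (rule real_sqrt_unique) auto
  finally show ?thesis .
qed

subsection \<open>Massart's finite class lemma\<close>

lemma cosh_le_exp_half_square: "cosh (t::real) \<le> exp (t^2 / 2)"
proof -
  define a where "a = \<bar>t\<bar>"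
  have "-(2*a) * (1/2) + ln (1 + (1/2) * (exp (2*a) - 1)) \<le> (2*a)^2 / 8"
    by (rule Hoeffdings_lemma_aux) (auto simp: a_def)
  moreover have "1 + (1/2) * (exp (2*a) - 1) = exp a * cosh a"
    by (simp add: cosh_field_def field_simps exp_minus flip: exp_add)
  ultimately have "ln (cosh a) \<le> a^2 / 2" by (simp add: ln_mult power2_eq_square)
  then have "cosh a \<le> exp (a^2 / 2)" by (metis cosh_real_pos exp_le_cancel_iff exp_ln)
  then show ?thesis by (simp add: a_def)
qed

lemma exp_mean_le_mean_exp:
  fixes y :: "'a \<Rightarrow> real"
  assumes "finite A" "A \<noteq> {}"
  shows "exp ((\<Sum>a\<in>A. y a) / card A) \<le> (\<Sum>a\<in>A. exp (y a)) / card A"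
proof -
  define \<mu> where "\<mu> = (\<Sum>a\<in>A. y a) / card A"
  have card: "0 < real (card A)" using assms by (simp add: card_gt_0_iff)
  \<comment> \<open>tangent line of \<open>exp\<close> at the mean\<close>
  have "exp \<mu> * (1 + (y a - \<mu>)) \<le> exp (y a)" for a
    using mult_left_mono[OF exp_ge_add_one_self[of "y a - \<mu>"], of "exp \<mu>"]
    by (simp flip: exp_add)
  then have "(\<Sum>a\<in>A. exp \<mu> * (1 + (y a - \<mu>))) \<le> (\<Sum>a\<in>A. exp (y a))"
    by (rule sum_mono)
  moreover have "(\<Sum>a\<in>A. exp \<mu> * (1 + (y a - \<mu>))) = exp \<mu> * card A"
    using card by (simp add: \<mu>_def sum_distrib_left[symmetric] sum.distrib sum_subtractf)
  ultimately show ?thesis using card by (simp add: \<mu>_def field_simps)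
qed

lemma sum_signs_exp_eq_prod_cosh:
  fixes a :: "nat \<Rightarrow> real"
  shows
  "(\<Sum>\<epsilon>\<in>{..<m} \<rightarrow>\<^sub>E {-1, 1::real}. exp (\<Sum>i<m. \<epsilon> i * a i)) = (\<Prod>i<m. 2 * cosh (a i))"
proof -
  have "(\<Prod>i<m. 2 * cosh (a i)) = (\<Prod>i<m. \<Sum>e\<in>{-1, 1::real}. exp (e * a i))"
    by (intro prod.cong refl) (simp add: cosh_field_def)
  also have "\<dots> = (\<Sum>\<epsilon>\<in>{..<m} \<rightarrow>\<^sub>E {-1, 1::real}. \<Prod>i<m. exp (\<epsilon> i * a i))"
    by (rule prod_sum_PiE[where f = "\<lambda>i e. exp (e * a i)" and B = "\<lambda>_. {-1, 1}"]) auto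
  finally show ?thesis by (simp add: exp_sum)
qed

lemma sum_signs_exp_le:
  fixes a :: "nat \<Rightarrow> real" and m :: nat and l B :: real
  assumes "\<And>i. i < m \<Longrightarrow> \<bar>a i\<bar> \<le> B"
  shows "(\<Sum>\<epsilon>\<in>{..<m} \<rightarrow>\<^sub>E {-1, 1::real}. exp (l * (\<Sum>i<m. \<epsilon> i * a i)))
           \<le> 2^m * exp (real m * (l^2 * B^2 / 2))"
proof -
  have "cosh (l * a i) \<le> exp (l^2 * B^2 / 2)" if "i < m" for i
  proof -
    have "(l * a i)^2 \<le> (l * B)^2"
      using assms[OF that] by (simp add: abs_le_square_iff[symmetric] abs_mult mult_left_mono)
    then have "exp ((l * a i)^2 / 2) \<le> exp (l^2 * B^2 / 2)" by (simp add: power_mult_distrib)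
    then show ?thesis using cosh_le_exp_half_square[of "l * a i"] by linarith
  qed
  then have "(\<Prod>i<m. 2 * cosh (l * a i)) \<le> (\<Prod>i<m. 2 * exp (l^2 * B^2 / 2))"
    by (intro prod_mono) (auto simp: less_imp_le)
  also have "\<dots> = 2^m * exp (l^2 * B^2 / 2) ^ m"
    by (simp add: power_mult_distrib)
  also have "\<dots> = 2^m * exp (m * (l^2 * B^2 / 2))"
    by (simp only: exp_of_nat_mult)
  finally show ?thesis
    using sum_signs_exp_eq_prod_cosh[of "\<lambda>i. l * a i" m] by (simp add: sum_distrib_left mult_ac)
qed

lemma emp_rademacher_le_param:
  fixes G :: "(nat \<times> nat \<Rightarrow> real) set" and l :: real
  assumes zs: "zs \<noteq> []" and G: "finite G" "G \<noteq> {}"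
    and bound: "\<And>g i. g \<in> G \<Longrightarrow> i < length zs \<Longrightarrow> \<bar>g (zs ! i)\<bar> \<le> B" and l: "0 < l"
  shows "emp_rademacher zs G \<le> ln (card G) / (l * length zs) + l * B^2 / 2"
proof -
  define m where "m = length zs"
  define P where "P = {..<m} \<rightarrow>\<^sub>E {-1, 1::real}"
  define X where "X g \<epsilon> = (\<Sum>i<m. \<epsilon> i * g (zs ! i))" for g :: "nat \<times> nat \<Rightarrow> real" and \<epsilon>
  define S where "S \<epsilon> = (SUP g\<in>G. (1 / m) * X g \<epsilon>)" for \<epsilon>
  have m: "0 < m" using zs by (simp add: m_def)
  have P: "finite P" "P \<noteq> {}" "card P = 2^m"
    unfolding P_def by (auto simp: PiE_eq_empty_iff card_PiE numeral_2_eq_2 intro!: finite_PiE)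
  have R: "emp_rademacher zs G = (\<Sum>\<epsilon>\<in>P. S \<epsilon>) / 2^m"
    unfolding emp_rademacher_def P_def S_def X_def m_def ..
  \<comment> \<open>the supremum over the finite class is attained, hence bounded by the sum\<close>
  have sup_le_sum: "exp (l * m * S \<epsilon>) \<le> (\<Sum>g\<in>G. exp (l * X g \<epsilon>))" for \<epsilon>
  proof -
    have "S \<epsilon> = Max ((\<lambda>g. (1 / m) * X g \<epsilon>) ` G)"
      unfolding S_def using G by (intro cSup_eq_Max) auto
    also have "\<dots> \<in> (\<lambda>g. (1 / m) * X g \<epsilon>) ` G" using G by (intro Max_in) auto
    finally obtain g where g: "g \<in> G" "S \<epsilon> = (1 / m) * X g \<epsilon>" by blast
    then have "exp (l * m * S \<epsilon>) = exp (l * X g \<epsilon>)" using m by simp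
    also have "\<dots> \<le> (\<Sum>g\<in>G. exp (l * X g \<epsilon>))" using G g(1) by (intro member_le_sum) auto
    finally show ?thesis .
  qed
  have "exp (l * m * emp_rademacher zs G) = exp ((\<Sum>\<epsilon>\<in>P. l * m * S \<epsilon>) / card P)"
    by (simp add: R P(3) sum_distrib_left)
  also have "\<dots> \<le> (\<Sum>\<epsilon>\<in>P. exp (l * m * S \<epsilon>)) / card P"
    by (rule exp_mean_le_mean_exp[OF P(1,2)])
  also have "\<dots> \<le> (\<Sum>\<epsilon>\<in>P. \<Sum>g\<in>G. exp (l * X g \<epsilon>)) / card P"
    by (intro divide_right_mono sum_mono sup_le_sum) simp
  also have "\<dots> = (\<Sum>g\<in>G. \<Sum>\<epsilon>\<in>P. exp (l * X g \<epsilon>)) / card P"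
    by (rule arg_cong[where f = "\<lambda>t. t / card P"], rule sum.swap)
  also have "\<dots> \<le> (\<Sum>g\<in>G. 2^m * exp (m * (l^2 * B^2 / 2))) / card P"
    unfolding P_def X_def using bound
    by (intro divide_right_mono sum_mono sum_signs_exp_le) (auto simp: m_def)
  also have "\<dots> = exp (ln (card G) + m * (l^2 * B^2 / 2))"
    using G by (simp add: P(3) exp_add card_gt_0_iff)
  finally have "l * m * emp_rademacher zs G \<le> ln (card G) + m * (l^2 * B^2 / 2)" by simp
  then show ?thesis
    using l m by (simp add: m_def field_simps power2_eq_square)
qed

lemma le_two_sqrt_mult_if_le_div_add_mult:
  fixes x a b :: real
  assumes a: "0 \<le> a" and b: "0 \<le> b" and bound: "\<And>l. 0 < l \<Longrightarrow> x \<le> a / l + l * b"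
  shows "x \<le> 2 * sqrt (a * b)"
proof (cases "a = 0 \<or> b = 0")
  case False
  then have "0 < a" "0 < b" using a b by auto
  define l where "l = sqrt a / sqrt b"
  have "0 < l" using \<open>0 < a\<close> \<open>0 < b\<close> by (simp add: l_def)
  moreover have "a / l = sqrt a * sqrt b" "l * b = sqrt a * sqrt b"
    using \<open>0 < a\<close> \<open>0 < b\<close> real_sqrt_mult_self[of a] real_sqrt_mult_self[of b]
    by (simp_all add: l_def field_simps)
  ultimately show ?thesis using bound[of l] by (simp add: real_sqrt_mult)
next
  case True
  have "x \<le> 0 + e" if e: "0 < e" for e
  proof (cases "a = 0")
    case True
    have "0 < e / (b + 1)" using e b by simp
    then have "x \<le> a / (e / (b + 1)) + e / (b + 1) * b" by (rule bound)
    also have "\<dots> \<le> e" using True e b by (simp add: field_simps)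
    finally show ?thesis by simp
  next
    case False
    with \<open>a = 0 \<or> b = 0\<close> have "b = 0" by simp
    have "0 < (a + 1) / e" using e a by simp
    then have "x \<le> a / ((a + 1) / e) + (a + 1) / e * b" by (rule bound)
    also have "\<dots> \<le> e" using \<open>b = 0\<close> e a by (simp add: field_simps)
    finally show ?thesis by simp
  qed
  then have "x \<le> 0" by (rule field_le_epsilon)
  with True show ?thesis by auto
qed

lemma emp_rademacher_le_massart:
  fixes G :: "(nat \<times> nat \<Rightarrow> real) set"
  assumes zs: "zs \<noteq> []" and G: "finite G" "G \<noteq> {}"
    and bound: "\<And>g i. g \<in> G \<Longrightarrow> i < length zs \<Longrightarrow> \<bar>g (zs ! i)\<bar> \<le> B"
  shows "emp_rademacher zs G \<le> B * sqrt (2 * ln (card G)) / sqrt (length zs)"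
proof -
  define a where "a = ln (card G) / length zs"
  have B: "0 \<le> B"
    using bound[of _ 0] G zs by (meson abs_ge_zero all_not_in_conv length_greater_0_conv order.trans)
  have ln: "0 \<le> ln (card G)" using G by (simp add: Suc_le_eq card_gt_0_iff)
  then have "0 \<le> a" by (simp add: a_def)
  moreover have "emp_rademacher zs G \<le> a / l + l * (B^2 / 2)" if "0 < l" for l
  proof -
    have "emp_rademacher zs G \<le> ln (card G) / (l * length zs) + l * B^2 / 2"
      using zs G bound that by (rule emp_rademacher_le_param)
    then show ?thesis by (simp add: a_def mult.commute)
  qed
  ultimately have "emp_rademacher zs G \<le> 2 * sqrt (a * (B^2 / 2))"
    by (intro le_two_sqrt_mult_if_le_div_add_mult) auto
  also have "a * (B^2 / 2) = (B * sqrt (2 * ln (card G)) / sqrt (length zs) / 2)^2"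
    using ln zs by (simp add: a_def power_divide power_mult_distrib)
  then have "2 * sqrt (a * (B^2 / 2)) = B * sqrt (2 * ln (card G)) / sqrt (length zs)"
    using B zs ln by (simp add: abs_mult)
  finally show ?thesis .
qed

theorem mainTheorem6:
  shows "\<exists>\<eta> :: nat \<Rightarrow> real. \<eta> \<longlonglongrightarrow> 0 \<and>
    (\<forall>n m (zs :: (nat \<times> nat) list).
       0 < m \<longrightarrow> length zs = m \<longrightarrow>
       (\<forall>z \<in> set zs. fst z < 2^n \<and> snd z < 2^n) \<longrightarrow>
       emp_rademacher zs (F_stab n)
         \<le> 4 * ((1 + \<eta> n) * real n / sqrt (real m))
             * (SUP U \<in> clifford n. sup_norm_on zs (fch n U)))"
proof (intro exI[of _ "\<lambda>_. 0"] conjI allI impI)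
  fix n m :: nat and zs :: "(nat \<times> nat) list"
  assume m: "0 < m" and len: "length zs = m"
  define B where "B = (SUP U \<in> clifford n. sup_norm_on zs (fch n U))"
  have zs: "zs \<noteq> []" using m len by auto
  have "bdd_above ((\<lambda>U. sup_norm_on zs (fch n U)) ` clifford n)"
    using sup_norm_on_fch_le_one[OF _ zs] by (intro bdd_aboveI2) (auto simp: clifford_def)
  then have bound: "\<bar>g (zs ! i)\<bar> \<le> B" if "g \<in> F_stab n" "i < length zs" for g i
    using that abs_le_sup_norm_on unfolding F_stab_def B_def by (auto intro: cSUP_upper2)
  have B: "0 \<le> B" using bound[of _ 0] F_stab_nonempty zs by fastforce
  have "emp_rademacher zs (F_stab n) \<le> B * sqrt (2 * ln (card (F_stab n))) / sqrt m"
    using emp_rademacher_le_massart[OF zs finite_card_F_stab(1) F_stab_nonempty] bound len by simp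
  also have "\<dots> \<le> B * (4 * n) / sqrt m"
    using B sqrt_two_ln_card_F_stab_le by (intro divide_right_mono mult_left_mono) auto
  finally show "emp_rademacher zs (F_stab n) \<le> 4 * ((1 + 0) * real n / sqrt (real m)) * B"
    by (simp add: mult_ac)
qed simp

end
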